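(* Let $m,n\geq 0$ be integers. Then \[ \sum_{k=1}^{n}\frac{(q/z;q)_{k}(z;q)_{n-k}(z;q)_m}{(q;q)_k (q;q)_{n-k}(q^k;q)_{m+1}}z^k -\sum_{k=1}^{m}\frac{(q/z;q)_{k}(z;q)_{m-k}(z;q)_n}{(q;q)_k (q;q)_{m-k}(q^k;q)_{n+1}}z^k \] \[ =\frac{(1-zq^{-1})(z;q)_m(z;q)_n}{(q;q)_{m}(q;q)_{n}}\left(\sum_{k=1}^m\frac{q^k}{(1-zq^{k-1})(1-q^k)}-\sum_{k=1}^n\frac{q^k}{(1-zq^{k-1})(1-q^k)}\right). \]
   Context: For $N\geq 0$, $(x;q)_N=(1-x)(1-xq)\cdots(1-xq^{N-1})$ (with $(x;q)_0=1$). The identity is one of rational functions in $q$ and $z$. *)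

theory Defs
  imports Complex_Main
begin

definition qpoch :: "'a::comm_ring_1 \<Rightarrow> 'a \<Rightarrow> nat \<Rightarrow> 'a" where
  "qpoch x q N = (\<Prod>i<N. 1 - x * q ^ i)"

end

theory Submission
  imports Defs
begin

text \<open>Expanding \<open>1 / (q\<^sup>k;q)\<^sub>m\<^sub>+\<^sub>1\<close> in partial fractions turns the first sum on the left into a
  double sum over \<open>1 \<le> k \<le> n\<close>, \<open>0 \<le> l \<le> m\<close> with denominators \<open>1 - q\<^sup>k\<^sup>+\<^sup>l\<close>. For \<open>l \<ge> 1\<close> the
  inner sum over \<open>k\<close> is, up to its missing term \<open>k = 0\<close>, itself a partial fraction expansion, namely
  of \<open>(zq\<^sup>l;q)\<^sub>n / (q\<^sup>l;q)\<^sub>n\<^sub>+\<^sub>1\<close>; expanding that rational function once more yields a double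
  sum over \<open>(k, l)\<close> which is symmetric in \<open>n\<close> and \<open>m\<close>, since it satisfies the same recurrence
  in \<open>n\<close> as in \<open>m\<close>. So the difference of the two sums only sees the boundary terms, which are the
  sums \<open>\<Sum>\<^sub>k\<^sub>=\<^sub>1\<^sup>N c\<^sub>k / (1 - q\<^sup>k)\<close> of partial fraction coefficients; these are evaluated by
  induction on \<open>N\<close>.\<close>

lemma qpoch_0 [simp]: "qpoch x q 0 = 1"
  by (simp add: qpoch_def)

lemma qpoch_Suc: "qpoch x q (Suc N) = qpoch x q N * (1 - x * q ^ N)"
  by (simp add: qpoch_def)

lemma qpoch_Suc_left: "qpoch x q (Suc N) = (1 - x) * qpoch (x * q) q N"
  unfolding qpoch_def prod.lessThan_Suc_shift by (simp add: mult.assoc)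

lemma qpoch_0_left [simp]: "qpoch 0 q N = 1"
  by (simp add: qpoch_def)

lemma qpoch_nonzero:
  fixes x q :: "'a::idom"
  assumes "\<And>i. i < N \<Longrightarrow> x * q ^ i \<noteq> 1"
  shows "qpoch x q N \<noteq> 0"
  using assms unfolding qpoch_def by (auto simp: prod_zero_iff)

text \<open>\<open>qpoch_hom q c k\<close> is \<open>c\<^sup>k (q/c;q)\<^sub>k\<close>, written so that it also makes sense for \<open>c = 0\<close>.\<close>

definition qpoch_hom :: "'a::comm_ring_1 \<Rightarrow> 'a \<Rightarrow> nat \<Rightarrow> 'a" where
  "qpoch_hom q c k = (\<Prod>i<k. c - q ^ Suc i)"

lemma qpoch_hom_0 [simp]: "qpoch_hom q c 0 = 1"
  by (simp add: qpoch_hom_def)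

lemma qpoch_hom_Suc: "qpoch_hom q c (Suc k) = qpoch_hom q c k * (c - q ^ Suc k)"
  by (simp add: qpoch_hom_def)

lemma qpoch_div_times_power:
  fixes q z :: "'a::field"
  assumes "z \<noteq> 0"
  shows "qpoch (q / z) q k * z ^ k = qpoch_hom q z k"
proof (induction k)
  case (Suc k)
  have "qpoch (q / z) q (Suc k) * z ^ Suc k = qpoch (q / z) q k * z ^ k * ((1 - q / z * q ^ k) * z)"
    by (simp add: qpoch_Suc algebra_simps)
  also have "(1 - q / z * q ^ k) * z = z - q ^ Suc k"
    using assms by (simp add: field_simps)
  finally show ?case
    using Suc by (simp add: qpoch_hom_Suc)
qed simp

text \<open>The coefficient of \<open>1/(1 - x q\<^sup>k)\<close> in the partial fraction expansion of
  \<open>(cx;q)\<^sub>N / (x;q)\<^sub>N\<^sub>+\<^sub>1\<close>.\<close>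

definition pf_coeff :: "'a::field \<Rightarrow> 'a \<Rightarrow> nat \<Rightarrow> nat \<Rightarrow> 'a" where
  "pf_coeff q c N k = qpoch_hom q c k * qpoch c q (N - k) / (qpoch q q k * qpoch q q (N - k))"

lemma pf_coeff_0_right: "pf_coeff q c N 0 = qpoch c q N / qpoch q q N"
  by (simp add: pf_coeff_def)

lemma two_term_partial_fractions:
  fixes y p c q :: "'a::field"
  assumes "y \<noteq> 1" "y * p \<noteq> 1" "p \<noteq> 1" "p \<noteq> 0" "q \<noteq> 0"
  shows "(1 - c * y * p / q) / ((1 - y) * (1 - y * p))
       = ((1 - c * p / q) / (1 - p)) / (1 - y) + ((1 - c / q) / (1 - 1 / p)) / (1 - y * p)"
proof -
  have "1 - 1 / p = (p - 1) / p"
    using assms by (simp add: field_simps)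
  moreover have "1 - y \<noteq> 0" "1 - y * p \<noteq> 0" "1 - p \<noteq> 0" "p - 1 \<noteq> 0"
    using assms by auto
  ultimately show ?thesis
    using assms by (simp add: divide_simps) (simp add: algebra_simps)
qed

locale qgeneric =
  fixes q :: "'a::field"
  assumes q_nonzero: "q \<noteq> 0"
    and qpow_ne_1: "\<And>j. j \<ge> 1 \<Longrightarrow> q ^ j \<noteq> 1"
begin

lemma qpow_Suc_ne_1: "q ^ Suc j \<noteq> 1"
  using qpow_ne_1[of "Suc j"] by simp

lemma one_minus_qpow_Suc_nonzero: "1 - q ^ Suc j \<noteq> 0"
  using qpow_Suc_ne_1 by simp

lemma qpoch_q_nonzero: "qpoch q q N \<noteq> 0"
  by (rule qpoch_nonzero) (metis power_Suc qpow_Suc_ne_1)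

lemma qpow_eq_iff: "q ^ k = q ^ l \<longleftrightarrow> k = l"
proof -
  have "q ^ a \<noteq> q ^ b" if "a < b" for a b
  proof
    assume "q ^ a = q ^ b"
    also have "q ^ b = q ^ a * q ^ (b - a)"
      using that by (simp flip: power_add)
    finally have "q ^ (b - a) = 1"
      using q_nonzero by simp
    moreover have "b - a \<ge> 1"
      using that by simp
    ultimately show False
      using qpow_ne_1 by blast
  qed
  then show ?thesis
    by (metis linorder_neqE_nat)
qed

lemma pf_coeff_Suc:
  assumes "k \<le> N"
  shows "pf_coeff q c (Suc N) k = pf_coeff q c N k * (1 - c * q ^ (N - k)) / (1 - q ^ (Suc N - k))"
proof -
  have "Suc N - k = Suc (N - k)"
    using assms by (simp add: Suc_diff_le)
  moreover have "qpoch q q k \<noteq> 0" "qpoch q q (N - k) \<noteq> 0" "1 - q * q ^ (N - k) \<noteq> 0"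
    using qpoch_q_nonzero one_minus_qpow_Suc_nonzero[of "N - k"] by auto
  ultimately show ?thesis
    unfolding pf_coeff_def by (simp add: qpoch_Suc field_simps)
qed

lemma qpoch_times_inverse_qpow:
  "qpoch (c * inverse (q ^ M)) q M = (\<Prod>s<M. 1 - c * inverse (q ^ Suc s))"
proof (induction M arbitrary: c)
  case (Suc M)
  have "c * inverse (q ^ Suc M) * q = c * inverse (q ^ M)"
    using q_nonzero by (simp add: field_simps)
  then have "qpoch (c * inverse (q ^ Suc M)) q (Suc M)
      = (1 - c * inverse (q ^ Suc M)) * qpoch (c * inverse (q ^ M)) q M"
    by (simp only: qpoch_Suc_left)
  then show ?case
    using Suc by (simp only: prod.lessThan_Suc mult.commute)
qed simp

lemma pf_coeff_Suc_diag:
  "(1 - c / q) * qpoch (c * inverse (q ^ Suc N)) q N / qpoch (inverse (q ^ Suc N)) q (Suc N)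
   = pf_coeff q c (Suc N) (Suc N)"
proof -
  have "(1 - c / q) * qpoch (c * inverse (q ^ Suc N)) q N = qpoch (c * inverse (q ^ Suc N)) q (Suc N)"
    using q_nonzero by (simp add: qpoch_Suc field_simps)
  also have "\<dots> = (\<Prod>s<Suc N. 1 - c * inverse (q ^ Suc s))"
    by (rule qpoch_times_inverse_qpow)
  finally have num: "(1 - c / q) * qpoch (c * inverse (q ^ Suc N)) q N
      = (\<Prod>s<Suc N. 1 - c * inverse (q ^ Suc s))" .
  have den: "qpoch (inverse (q ^ Suc N)) q (Suc N) = (\<Prod>s<Suc N. 1 - inverse (q ^ Suc s))"
    using qpoch_times_inverse_qpow[of 1 "Suc N"] by simp
  have "(\<Prod>s<Suc N. 1 - c * inverse (q ^ Suc s)) / (\<Prod>s<Suc N. 1 - inverse (q ^ Suc s))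
      = (\<Prod>s<Suc N. (1 - c * inverse (q ^ Suc s)) / (1 - inverse (q ^ Suc s)))"
    by (simp add: prod_dividef)
  also have "\<dots> = (\<Prod>s<Suc N. (c - q ^ Suc s) / (1 - q ^ Suc s))"
  proof (rule prod.cong[OF refl])
    fix s
    have "q ^ Suc s \<noteq> 0" "1 - q ^ Suc s \<noteq> 0" "q ^ Suc s - 1 \<noteq> 0"
      using q_nonzero qpow_Suc_ne_1[of s] by auto
    then show "(1 - c * inverse (q ^ Suc s)) / (1 - inverse (q ^ Suc s)) = (c - q ^ Suc s) / (1 - q ^ Suc s)"
      by (simp add: field_simps)
  qed
  also have "\<dots> = qpoch_hom q c (Suc N) / qpoch q q (Suc N)"
    unfolding qpoch_hom_def qpoch_def by (simp add: prod_dividef)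
  finally show ?thesis
    unfolding num den pf_coeff_def by simp
qed

text \<open>The coefficient of \<open>1/(1 - x q\<^sup>N\<^sup>+\<^sup>1)\<close> in the expansion of
  \<open>(1 - cxq\<^sup>N) / ((1 - xq\<^sup>k) (1 - xq\<^sup>N\<^sup>+\<^sup>1))\<close>, which is what passing from \<open>N\<close> to \<open>N + 1\<close>
  multiplies the \<open>k\<close>-th term by.\<close>

definition pf_split_coeff :: "'a \<Rightarrow> nat \<Rightarrow> nat \<Rightarrow> 'a" where
  "pf_split_coeff c N k = (1 - c / q) / (1 - inverse (q ^ Suc N) * q ^ k)"

lemma pf_coeff_Suc_split:
  assumes k: "k \<le> N" and "x * q ^ k \<noteq> 1" and "x * q ^ Suc N \<noteq> 1"
  shows "pf_coeff q c (Suc N) k / (1 - x * q ^ k)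
    = pf_coeff q c N k * ((1 - c * x * q ^ N) / ((1 - x * q ^ k) * (1 - x * q ^ Suc N)))
      - pf_coeff q c N k * pf_split_coeff c N k / (1 - x * q ^ Suc N)"
proof -
  define p where "p = q ^ (Suc N - k)"
  have qk: "q ^ k * p = q ^ Suc N"
    using k by (simp add: p_def flip: power_add)
  have p: "p \<noteq> 1" "p \<noteq> 0"
    unfolding p_def using qpow_ne_1[of "Suc N - k"] k q_nonzero by auto
  have xp: "x * q ^ k * p = x * q ^ Suc N"
    using qk by (simp add: mult.assoc)
  have cxp: "c * (x * q ^ k) * p / q = c * x * q ^ N"
    using xp q_nonzero by (simp add: field_simps)
  have cp: "c * p / q = c * q ^ (N - k)"
    using k q_nonzero by (simp add: p_def Suc_diff_le)
  have inv_p: "1 / p = inverse (q ^ Suc N) * q ^ k"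
    using qk q_nonzero p by (simp add: field_simps)
  have "(1 - c * (x * q ^ k) * p / q) / ((1 - x * q ^ k) * (1 - x * q ^ k * p))
      = ((1 - c * p / q) / (1 - p)) / (1 - x * q ^ k)
        + ((1 - c / q) / (1 - 1 / p)) / (1 - x * q ^ k * p)"
    by (intro two_term_partial_fractions) (use assms(2,3) p q_nonzero in \<open>auto simp: xp\<close>)
  then have "(1 - c * x * q ^ N) / ((1 - x * q ^ k) * (1 - x * q ^ Suc N))
      = ((1 - c * q ^ (N - k)) / (1 - q ^ (Suc N - k))) / (1 - x * q ^ k)
        + pf_split_coeff c N k / (1 - x * q ^ Suc N)"
    unfolding pf_split_coeff_def by (simp only: xp cxp cp inv_p, simp only: p_def)
  moreover have "1 - x * q ^ k \<noteq> 0"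
    using assms(2) by simp
  ultimately show ?thesis
    unfolding pf_coeff_Suc[OF k] by (simp add: field_simps)
qed

lemma pf_split_coeff_sum:
  assumes "(\<Sum>k\<le>N. pf_coeff q c N k / (1 - inverse (q ^ Suc N) * q ^ k))
      = qpoch (c * inverse (q ^ Suc N)) q N / qpoch (inverse (q ^ Suc N)) q (Suc N)"
  shows "(\<Sum>k\<le>N. pf_coeff q c N k * pf_split_coeff c N k) = pf_coeff q c (Suc N) (Suc N)"
proof -
  have "(\<Sum>k\<le>N. pf_coeff q c N k * pf_split_coeff c N k)
      = (1 - c / q) * (\<Sum>k\<le>N. pf_coeff q c N k / (1 - inverse (q ^ Suc N) * q ^ k))"
    unfolding pf_split_coeff_def by (simp add: sum_distrib_left mult.commute)
  then show ?thesis
    using assms pf_coeff_Suc_diag by simp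
qed

lemma inverse_qpow_Suc_times_qpow_ne_1: "k \<le> N \<Longrightarrow> inverse (q ^ Suc N) * q ^ k \<noteq> 1"
  using q_nonzero qpow_eq_iff[of k "Suc N"] by (auto simp: field_simps)

lemma pf_coeff_partial_fractions:
  assumes "\<And>k. k \<le> N \<Longrightarrow> x * q ^ k \<noteq> 1"
  shows "(\<Sum>k\<le>N. pf_coeff q c N k / (1 - x * q ^ k)) = qpoch (c * x) q N / qpoch x q (Suc N)"
  using assms
proof (induction N arbitrary: x)
  case 0
  then show ?case
    by (simp add: pf_coeff_def qpoch_Suc)
next
  case (Suc N)
  have split_sum: "(\<Sum>k\<le>N. pf_coeff q c N k * pf_split_coeff c N k) = pf_coeff q c (Suc N) (Suc N)"
    by (rule pf_split_coeff_sum) (use Suc.IH inverse_qpow_Suc_times_qpow_ne_1 in simp)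
  have term_split: "pf_coeff q c (Suc N) k / (1 - x * q ^ k)
      = pf_coeff q c N k * ((1 - c * x * q ^ N) / ((1 - x * q ^ k) * (1 - x * q ^ Suc N)))
        - pf_coeff q c N k * pf_split_coeff c N k / (1 - x * q ^ Suc N)" if "k \<le> N" for k
    using that Suc.prems[of k] Suc.prems[of "Suc N"] by (intro pf_coeff_Suc_split) auto
  have "(\<Sum>k\<le>N. pf_coeff q c (Suc N) k / (1 - x * q ^ k))
      = (1 - c * x * q ^ N) / (1 - x * q ^ Suc N) * (\<Sum>k\<le>N. pf_coeff q c N k / (1 - x * q ^ k))
        - (\<Sum>k\<le>N. pf_coeff q c N k * pf_split_coeff c N k) / (1 - x * q ^ Suc N)"
    using Suc.prems
    by (simp add: term_split sum_subtractf sum_distrib_left sum_divide_distrib field_simps)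
  also have "\<dots> = (1 - c * x * q ^ N) / (1 - x * q ^ Suc N) * (qpoch (c * x) q N / qpoch x q (Suc N))
        - pf_coeff q c (Suc N) (Suc N) / (1 - x * q ^ Suc N)"
    using Suc by (simp add: split_sum)
  finally have "(\<Sum>k\<le>Suc N. pf_coeff q c (Suc N) k / (1 - x * q ^ k))
      = (1 - c * x * q ^ N) / (1 - x * q ^ Suc N) * (qpoch (c * x) q N / qpoch x q (Suc N))"
    by simp
  also have "\<dots> = qpoch (c * x) q (Suc N) / qpoch x q (Suc (Suc N))"
    by (simp only: qpoch_Suc[of "c * x" q N] qpoch_Suc[of x q "Suc N"] times_divide_times_eq ac_simps)
  finally show ?case .
qed

end

lemma sum_atMost_eq_0_plus_atLeast_1:
  fixes f :: "nat \<Rightarrow> 'a::comm_monoid_add"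
  shows "(\<Sum>k\<le>N. f k) = f 0 + (\<Sum>k=1..N. f k)"
  unfolding atMost_atLeast0 by (subst sum.atLeast_Suc_atMost) simp_all

definition qharmonic :: "'a::field \<Rightarrow> 'a \<Rightarrow> nat \<Rightarrow> 'a" where
  "qharmonic q c N = (\<Sum>k=1..N. q ^ k / ((1 - c * q ^ (k - 1)) * (1 - q ^ k)))"

lemma qharmonic_Suc:
  "qharmonic q c (Suc N) = qharmonic q c N + q ^ Suc N / ((1 - c * q ^ N) * (1 - q ^ Suc N))"
  by (simp add: qharmonic_def)

definition pf_tail_sum :: "'a::field \<Rightarrow> 'a \<Rightarrow> nat \<Rightarrow> 'a" where
  "pf_tail_sum q c N = (\<Sum>k=1..N. pf_coeff q c N k / (1 - q ^ k))"

context qgeneric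
begin

lemma pf_tail_sum_Suc:
  "pf_tail_sum q c (Suc N)
   = (1 - c * q ^ N) / (1 - q ^ Suc N) * pf_tail_sum q c N
     + pf_coeff q c N 0 * pf_split_coeff c N 0 / (1 - q ^ Suc N)"
proof -
  have term_split: "pf_coeff q c (Suc N) k / (1 - q ^ k)
      = pf_coeff q c N k * ((1 - c * q ^ N) / ((1 - q ^ k) * (1 - q ^ Suc N)))
        - pf_coeff q c N k * pf_split_coeff c N k / (1 - q ^ Suc N)" if "k \<in> {1..N}" for k
    using pf_coeff_Suc_split[of k N 1 c] that qpow_ne_1[of k] qpow_Suc_ne_1[of N] by simp
  have split_sum: "(\<Sum>k\<le>N. pf_coeff q c N k * pf_split_coeff c N k) = pf_coeff q c (Suc N) (Suc N)"
    by (rule pf_split_coeff_sum)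
      (use pf_coeff_partial_fractions inverse_qpow_Suc_times_qpow_ne_1 in simp)
  have "(\<Sum>k=1..N. pf_coeff q c (Suc N) k / (1 - q ^ k))
      = (1 - c * q ^ N) / (1 - q ^ Suc N) * (\<Sum>k=1..N. pf_coeff q c N k / (1 - q ^ k))
        - (\<Sum>k=1..N. pf_coeff q c N k * pf_split_coeff c N k) / (1 - q ^ Suc N)"
    by (simp add: term_split sum_subtractf sum_distrib_left sum_divide_distrib field_simps)
  also have "(\<Sum>k=1..N. pf_coeff q c N k * pf_split_coeff c N k)
      = pf_coeff q c (Suc N) (Suc N) - pf_coeff q c N 0 * pf_split_coeff c N 0"
    using split_sum sum_atMost_eq_0_plus_atLeast_1[of "\<lambda>k. pf_coeff q c N k * pf_split_coeff c N k" N]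
    by (metis add_diff_cancel_left')
  finally show ?thesis
    unfolding pf_tail_sum_def by (simp add: diff_divide_distrib)
qed

lemma pf_tail_sum_eq:
  assumes cq: "\<And>j. c * q ^ j \<noteq> 1"
  shows "pf_tail_sum q c N = - (qpoch c q N / qpoch q q N) * (1 - c / q) * qharmonic q c N"
proof (induction N)
  case 0
  then show ?case
    by (simp add: pf_tail_sum_def qharmonic_def)
next
  case (Suc N)
  define P where "P = qpoch c q N"
  define Q where "Q = qpoch q q N"
  define a where "a = q ^ Suc N"
  define b where "b = c * q ^ N"
  have nonzero: "P \<noteq> 0" "Q \<noteq> 0" "a \<noteq> 0" "1 - a \<noteq> 0" "a - 1 \<noteq> 0" "1 - b \<noteq> 0"
    unfolding P_def Q_def a_def b_def
    using qpoch_nonzero cq qpoch_q_nonzero qpow_Suc_ne_1[of N] q_nonzero by auto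
  have ab: "c * a = q * b"
    unfolding a_def b_def by simp
  have split0: "pf_split_coeff c N 0 = (1 - c / q) * a / (a - 1)"
    using nonzero unfolding pf_split_coeff_def by (simp add: a_def field_simps)
  have Suc_N: "qpoch c q (Suc N) = P * (1 - b)" "qpoch q q (Suc N) = Q * (1 - a)"
    unfolding P_def Q_def a_def b_def by (simp_all add: qpoch_Suc)
  show ?case
    unfolding pf_tail_sum_Suc Suc.IH qharmonic_Suc pf_coeff_0_right split0 Suc_N
    unfolding P_def[symmetric] Q_def[symmetric] a_def[symmetric] b_def[symmetric]
    using nonzero ab q_nonzero by (simp add: divide_simps) (simp add: algebra_simps)
qed

end

definition qinv_coeff :: "'a::field \<Rightarrow> nat \<Rightarrow> nat \<Rightarrow> 'a" where
  "qinv_coeff q m l = (if l \<le> m then pf_coeff q 0 m l else 0)"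

lemma qinv_coeff_eq_0 [simp]: "m < l \<Longrightarrow> qinv_coeff q m l = 0"
  by (simp add: qinv_coeff_def)

lemma qinv_coeff_0_0 [simp]: "qinv_coeff q 0 0 = 1"
  by (simp add: qinv_coeff_def pf_coeff_def)

context qgeneric
begin

lemma inverse_qpoch_partial_fractions:
  assumes "\<And>l. l \<le> M \<Longrightarrow> x * q ^ l \<noteq> 1"
  shows "1 / qpoch x q (Suc M) = (\<Sum>l\<le>M. qinv_coeff q M l / (1 - x * q ^ l))"
  using pf_coeff_partial_fractions[of M x 0] assms by (simp add: qinv_coeff_def)

lemma inverse_qpoch_qpow_partial_fractions:
  assumes "k \<ge> 1"
  shows "1 / qpoch (q ^ k) q (Suc M) = (\<Sum>l\<le>M. qinv_coeff q M l / (1 - q ^ (k + l)))"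
proof -
  have "q ^ k * q ^ l \<noteq> 1" for l
    using qpow_ne_1[of "k + l"] assms by (simp add: power_add)
  then show ?thesis
    using inverse_qpoch_partial_fractions[of M "q ^ k"] by (simp add: power_add)
qed

lemma qinv_coeff_Suc_0: "(1 - q ^ Suc m) * qinv_coeff q (Suc m) 0 = qinv_coeff q m 0"
  using qpoch_q_nonzero[of m] one_minus_qpow_Suc_nonzero[of m]
  by (simp add: qinv_coeff_def pf_coeff_def qpoch_Suc field_simps)

lemma qinv_coeff_Suc_Suc:
  assumes "l \<le> m"
  shows "(1 - q ^ Suc m) * qinv_coeff q (Suc m) (Suc l)
    = qinv_coeff q m (Suc l) - q ^ Suc m * qinv_coeff q m l"
proof -
  obtain d where m: "m = l + d"
    using assms le_Suc_ex by blast
  have "q ^ Suc m = q ^ Suc l * q ^ d"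
    unfolding m by (simp add: power_add)
  moreover have "qpoch q q l \<noteq> 0" "qpoch q q d \<noteq> 0" "1 - q ^ Suc l \<noteq> 0" "1 - q ^ Suc d \<noteq> 0"
    using qpoch_q_nonzero one_minus_qpow_Suc_nonzero by auto
  moreover have "qpoch q q (Suc d) = qpoch q q d * (1 - q ^ Suc d)"
    by (simp add: qpoch_Suc)
  ultimately show ?thesis
    unfolding qinv_coeff_def pf_coeff_def m
    by (cases d) (simp_all add: qpoch_Suc qpoch_hom_Suc divide_simps, (simp add: algebra_simps power_add)+)
qed

lemma sum_qinv_coeff_Suc:
  "(1 - q ^ Suc m) * (\<Sum>l\<le>Suc m. qinv_coeff q (Suc m) l * F l)
   = (\<Sum>l\<le>m. qinv_coeff q m l * F l) - q ^ Suc m * (\<Sum>l\<le>m. qinv_coeff q m l * F (Suc l))"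
proof -
  have shift: "(\<Sum>l\<le>m. qinv_coeff q m l * F l)
      = qinv_coeff q m 0 * F 0 + (\<Sum>l\<le>m. qinv_coeff q m (Suc l) * F (Suc l))"
    using sum.atMost_Suc_shift[of "\<lambda>l. qinv_coeff q m l * F l" m] by simp
  have "(1 - q ^ Suc m) * (\<Sum>l\<le>Suc m. qinv_coeff q (Suc m) l * F l)
      = (1 - q ^ Suc m) * qinv_coeff q (Suc m) 0 * F 0
        + (\<Sum>l\<le>m. (1 - q ^ Suc m) * qinv_coeff q (Suc m) (Suc l) * F (Suc l))"
    by (simp only: sum.atMost_Suc_shift sum_distrib_left distrib_left mult.assoc)
  also have "\<dots> = qinv_coeff q m 0 * F 0
      + (\<Sum>l\<le>m. (qinv_coeff q m (Suc l) - q ^ Suc m * qinv_coeff q m l) * F (Suc l))"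
    using qinv_coeff_Suc_0 qinv_coeff_Suc_Suc by simp
  also have "\<dots> = (\<Sum>l\<le>m. qinv_coeff q m l * F l) - q ^ Suc m * (\<Sum>l\<le>m. qinv_coeff q m l * F (Suc l))"
    unfolding shift by (simp add: algebra_simps sum_subtractf sum_distrib_left)
  finally show ?thesis .
qed

lemma qinv_coeff_Suc_right:
  assumes "l < m"
  shows "qinv_coeff q m (Suc l) * (1 - q ^ Suc l) = - (q ^ Suc l * (1 - q ^ (m - l)) * qinv_coeff q m l)"
proof -
  obtain d where m: "m = Suc (l + d)"
    using assms less_imp_Suc_add by blast
  have "m - Suc l = d" "m - l = Suc d"
    using m by auto
  moreover have "qpoch q q l \<noteq> 0" "qpoch q q d \<noteq> 0" "1 - q * q ^ l \<noteq> 0" "1 - q * q ^ d \<noteq> 0"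
    using qpoch_q_nonzero one_minus_qpow_Suc_nonzero by auto
  ultimately show ?thesis
    using assms unfolding qinv_coeff_def pf_coeff_def
    by (simp add: qpoch_Suc qpoch_hom_Suc divide_simps)
qed

lemma sum_qinv_coeff_one_minus_qpow:
  "(\<Sum>l\<le>m. qinv_coeff q m l * (1 - q ^ l) * F l)
   = - (\<Sum>l<m. q ^ Suc l * (1 - q ^ (m - l)) * qinv_coeff q m l * F (Suc l))"
proof -
  have "(\<Sum>l\<le>m. qinv_coeff q m l * (1 - q ^ l) * F l)
      = (\<Sum>l<m. qinv_coeff q m (Suc l) * (1 - q ^ Suc l) * F (Suc l))"
    unfolding lessThan_Suc_atMost[symmetric] by (simp only: sum.lessThan_Suc_shift) simp
  also have "\<dots> = (\<Sum>l<m. - (q ^ Suc l * (1 - q ^ (m - l)) * qinv_coeff q m l) * F (Suc l))"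
    by (rule sum.cong[OF refl]) (simp only: lessThan_iff qinv_coeff_Suc_right)
  finally show ?thesis
    by (simp add: sum_negf)
qed

end

definition qinner_sum :: "'a::field \<Rightarrow> (nat \<Rightarrow> 'a) \<Rightarrow> 'a \<Rightarrow> nat \<Rightarrow> nat \<Rightarrow> nat \<Rightarrow> 'a" where
  "qinner_sum q \<phi> c n m k =
    (\<Sum>l\<le>m. qinv_coeff q m l * (qpoch c q m * qpoch (c * q ^ l) q n * \<phi> (k + l)))"

definition qdouble_sum :: "'a::field \<Rightarrow> (nat \<Rightarrow> 'a) \<Rightarrow> 'a \<Rightarrow> nat \<Rightarrow> nat \<Rightarrow> 'a" where
  "qdouble_sum q \<phi> c n m = (\<Sum>k\<le>n. qinv_coeff q n k * qinner_sum q \<phi> c n m k)"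

context qgeneric
begin

lemma qinner_sum_Suc_right:
  "(1 - q ^ Suc m) * qinner_sum q \<phi> c n (Suc m) k
   = (1 - c * q ^ m) * qinner_sum q \<phi> c n m k
     - q ^ Suc m * ((1 - c) * qinner_sum q (\<lambda>j. \<phi> (Suc j)) (c * q) n m k)"
proof -
  have "(1 - q ^ Suc m) * qinner_sum q \<phi> c n (Suc m) k
      = (\<Sum>l\<le>m. qinv_coeff q m l * (qpoch c q (Suc m) * qpoch (c * q ^ l) q n * \<phi> (k + l)))
        - q ^ Suc m * (\<Sum>l\<le>m. qinv_coeff q m l
            * (qpoch c q (Suc m) * qpoch (c * q ^ Suc l) q n * \<phi> (k + Suc l)))"
    unfolding qinner_sum_def
    by (rule sum_qinv_coeff_Suc[of m "\<lambda>l. qpoch c q (Suc m) * qpoch (c * q ^ l) q n * \<phi> (k + l)"])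
  also have "(\<Sum>l\<le>m. qinv_coeff q m l * (qpoch c q (Suc m) * qpoch (c * q ^ l) q n * \<phi> (k + l)))
      = (1 - c * q ^ m) * qinner_sum q \<phi> c n m k"
    unfolding qinner_sum_def by (simp add: sum_distrib_left qpoch_Suc mult_ac)
  also have "(\<Sum>l\<le>m. qinv_coeff q m l
            * (qpoch c q (Suc m) * qpoch (c * q ^ Suc l) q n * \<phi> (k + Suc l)))
      = (1 - c) * qinner_sum q (\<lambda>j. \<phi> (Suc j)) (c * q) n m k"
    unfolding qinner_sum_def by (simp add: sum_distrib_left qpoch_Suc_left mult_ac)
  finally show ?thesis .
qed

lemma qdouble_sum_Suc_right:
  "(1 - q ^ Suc m) * qdouble_sum q \<phi> c n (Suc m)
   = (1 - c * q ^ m) * qdouble_sum q \<phi> c n m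
     - q ^ Suc m * (1 - c) * qdouble_sum q (\<lambda>j. \<phi> (Suc j)) (c * q) n m"
proof -
  have "(1 - q ^ Suc m) * qdouble_sum q \<phi> c n (Suc m)
      = (\<Sum>k\<le>n. qinv_coeff q n k * ((1 - q ^ Suc m) * qinner_sum q \<phi> c n (Suc m) k))"
    unfolding qdouble_sum_def sum_distrib_left by (simp add: mult_ac)
  also have "\<dots> = (\<Sum>k\<le>n. qinv_coeff q n k * ((1 - c * q ^ m) * qinner_sum q \<phi> c n m k
      - q ^ Suc m * ((1 - c) * qinner_sum q (\<lambda>j. \<phi> (Suc j)) (c * q) n m k)))"
    by (simp only: qinner_sum_Suc_right)
  also have "\<dots> = (1 - c * q ^ m) * qdouble_sum q \<phi> c n m
      - q ^ Suc m * (1 - c) * qdouble_sum q (\<lambda>j. \<phi> (Suc j)) (c * q) n m"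
    unfolding qdouble_sum_def by (simp add: sum_subtractf sum_distrib_left sum.distrib algebra_simps)
  finally show ?thesis .
qed

lemma qinner_sum_Suc_left_diff:
  "qinner_sum q \<phi> c (Suc n) m k - (1 - c * q ^ n) * qinner_sum q \<phi> c n m k
   = q ^ Suc n * (\<Sum>l<m. qinv_coeff q m l
       * (qpoch c q m * qpoch (c * q ^ Suc l) q n * \<phi> (k + Suc l) * (c * (q ^ m - q ^ l))))"
proof -
  have "qinner_sum q \<phi> c (Suc n) m k - (1 - c * q ^ n) * qinner_sum q \<phi> c n m k
      = (\<Sum>l\<le>m. qinv_coeff q m l * (1 - q ^ l)
          * (qpoch c q m * qpoch (c * q ^ l) q n * \<phi> (k + l) * (c * q ^ n)))"
    unfolding qinner_sum_def sum_distrib_left sum_subtractf[symmetric]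
    by (rule sum.cong[OF refl]) (simp add: qpoch_Suc algebra_simps)
  also have "\<dots> = - (\<Sum>l<m. q ^ Suc l * (1 - q ^ (m - l)) * qinv_coeff q m l
          * (qpoch c q m * qpoch (c * q ^ Suc l) q n * \<phi> (k + Suc l) * (c * q ^ n)))"
    by (rule sum_qinv_coeff_one_minus_qpow)
  also have "\<dots> = q ^ Suc n * (\<Sum>l<m. qinv_coeff q m l
       * (qpoch c q m * qpoch (c * q ^ Suc l) q n * \<phi> (k + Suc l) * (c * (q ^ m - q ^ l))))"
    unfolding sum_distrib_left sum_negf[symmetric]
  proof (rule sum.cong[OF refl])
    fix l
    assume "l \<in> {..<m}"
    then have "q ^ m = q ^ l * q ^ (m - l)"
      by (simp flip: power_add)
    then show "- (q ^ Suc l * (1 - q ^ (m - l)) * qinv_coeff q m l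
          * (qpoch c q m * qpoch (c * q ^ Suc l) q n * \<phi> (k + Suc l) * (c * q ^ n)))
        = q ^ Suc n * (qinv_coeff q m l
          * (qpoch c q m * qpoch (c * q ^ Suc l) q n * \<phi> (k + Suc l) * (c * (q ^ m - q ^ l))))"
      by (simp add: algebra_simps)
  qed
  finally show ?thesis .
qed

lemma qinner_sum_Suc_Suc_diff:
  "qinner_sum q \<phi> c (Suc n) m (Suc k) - (1 - c) * qinner_sum q (\<lambda>j. \<phi> (Suc j)) (c * q) n m k
   = (\<Sum>l<m. qinv_coeff q m l
       * (qpoch c q m * qpoch (c * q ^ Suc l) q n * \<phi> (k + Suc l) * (c * (q ^ m - q ^ l))))"
proof -
  have front: "(1 - c) * qpoch (c * q) q m = qpoch c q m * (1 - c * q ^ m)"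
    using qpoch_Suc_left[of c q m] qpoch_Suc[of c q m] by simp
  have shift: "qpoch (c * q ^ l) q (Suc n) = (1 - c * q ^ l) * qpoch (c * q ^ Suc l) q n" for l
    using qpoch_Suc_left[of "c * q ^ l" q n] by (simp add: mult_ac)
  have "qinner_sum q \<phi> c (Suc n) m (Suc k) - (1 - c) * qinner_sum q (\<lambda>j. \<phi> (Suc j)) (c * q) n m k
      = (\<Sum>l\<le>m. qinv_coeff q m l
          * (qpoch c q m * qpoch (c * q ^ Suc l) q n * \<phi> (k + Suc l) * (c * (q ^ m - q ^ l))))"
    unfolding qinner_sum_def sum_distrib_left sum_subtractf[symmetric]
  proof (rule sum.cong[OF refl])
    fix l
    have "(1 - c) * (qinv_coeff q m l * (qpoch (c * q) q m * qpoch (c * q * q ^ l) q n * \<phi> (Suc (k + l))))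
        = qinv_coeff q m l * (((1 - c) * qpoch (c * q) q m) * qpoch (c * q ^ Suc l) q n * \<phi> (k + Suc l))"
      by (simp add: mult_ac)
    then show "qinv_coeff q m l * (qpoch c q m * qpoch (c * q ^ l) q (Suc n) * \<phi> (Suc k + l))
        - (1 - c) * (qinv_coeff q m l * (qpoch (c * q) q m * qpoch (c * q * q ^ l) q n * \<phi> (Suc (k + l))))
        = qinv_coeff q m l
          * (qpoch c q m * qpoch (c * q ^ Suc l) q n * \<phi> (k + Suc l) * (c * (q ^ m - q ^ l)))"
      unfolding front shift by (simp add: algebra_simps)
  qed
  then show ?thesis
    by (simp add: lessThan_Suc_atMost[symmetric])
qed

lemma qinner_sum_Suc_left:
  "qinner_sum q \<phi> c (Suc n) m k - q ^ Suc n * qinner_sum q \<phi> c (Suc n) m (Suc k)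
   = (1 - c * q ^ n) * qinner_sum q \<phi> c n m k
     - q ^ Suc n * ((1 - c) * qinner_sum q (\<lambda>j. \<phi> (Suc j)) (c * q) n m k)"
  unfolding qinner_sum_Suc_left_diff[of \<phi> c n m k, unfolded diff_eq_eq]
    qinner_sum_Suc_Suc_diff[of \<phi> c n m k, unfolded diff_eq_eq]
  by (simp add: algebra_simps)

lemma qdouble_sum_Suc_left:
  "(1 - q ^ Suc n) * qdouble_sum q \<phi> c (Suc n) m
   = (1 - c * q ^ n) * qdouble_sum q \<phi> c n m
     - q ^ Suc n * (1 - c) * qdouble_sum q (\<lambda>j. \<phi> (Suc j)) (c * q) n m"
proof -
  have "(1 - q ^ Suc n) * qdouble_sum q \<phi> c (Suc n) m
      = (\<Sum>k\<le>n. qinv_coeff q n k * qinner_sum q \<phi> c (Suc n) m k)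
        - q ^ Suc n * (\<Sum>k\<le>n. qinv_coeff q n k * qinner_sum q \<phi> c (Suc n) m (Suc k))"
    unfolding qdouble_sum_def by (rule sum_qinv_coeff_Suc)
  also have "\<dots> = (\<Sum>k\<le>n. qinv_coeff q n k
      * (qinner_sum q \<phi> c (Suc n) m k - q ^ Suc n * qinner_sum q \<phi> c (Suc n) m (Suc k)))"
    by (simp add: sum_subtractf sum_distrib_left algebra_simps)
  also have "\<dots> = (\<Sum>k\<le>n. qinv_coeff q n k * ((1 - c * q ^ n) * qinner_sum q \<phi> c n m k
      - q ^ Suc n * ((1 - c) * qinner_sum q (\<lambda>j. \<phi> (Suc j)) (c * q) n m k)))"
    by (simp only: qinner_sum_Suc_left)
  also have "\<dots> = (1 - c * q ^ n) * qdouble_sum q \<phi> c n m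
      - q ^ Suc n * (1 - c) * qdouble_sum q (\<lambda>j. \<phi> (Suc j)) (c * q) n m"
    unfolding qdouble_sum_def by (simp add: sum_subtractf sum_distrib_left sum.distrib algebra_simps)
  finally show ?thesis .
qed

lemma qdouble_sum_commute: "qdouble_sum q \<phi> c n m = qdouble_sum q \<phi> c m n"
proof (induction m arbitrary: n c \<phi>)
  case 0
  show ?case
    by (simp add: qdouble_sum_def qinner_sum_def sum_distrib_left mult_ac)
next
  case (Suc m)
  have "(1 - q ^ Suc m) * qdouble_sum q \<phi> c n (Suc m)
      = (1 - c * q ^ m) * qdouble_sum q \<phi> c n m
        - q ^ Suc m * (1 - c) * qdouble_sum q (\<lambda>j. \<phi> (Suc j)) (c * q) n m"
    by (rule qdouble_sum_Suc_right)
  also have "\<dots> = (1 - c * q ^ m) * qdouble_sum q \<phi> c m n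
        - q ^ Suc m * (1 - c) * qdouble_sum q (\<lambda>j. \<phi> (Suc j)) (c * q) m n"
    using Suc.IH by simp
  also have "\<dots> = (1 - q ^ Suc m) * qdouble_sum q \<phi> c (Suc m) n"
    by (rule qdouble_sum_Suc_left[symmetric])
  finally show ?case
    using one_minus_qpow_Suc_nonzero[of m] by simp
qed

end

locale qz_generic = qgeneric +
  fixes z :: 'a
  assumes z_nonzero: "z \<noteq> 0"
    and zqpow_ne_1: "\<And>j. z * q ^ j \<noteq> 1"
begin

definition lhs_sum :: "nat \<Rightarrow> nat \<Rightarrow> 'a" where
  "lhs_sum n m = (\<Sum>k=1..n. qpoch (q / z) q k * qpoch z q (n - k) * qpoch z q m
      / (qpoch q q k * qpoch q q (n - k) * qpoch (q ^ k) q (m + 1)) * z ^ k)"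

lemma lhs_sum_expand:
  "lhs_sum n m = (\<Sum>l\<le>m. qinv_coeff q m l
      * (qpoch z q m * (\<Sum>k=1..n. pf_coeff q z n k / (1 - q ^ (k + l)))))"
proof -
  have "lhs_sum n m = (\<Sum>k=1..n. pf_coeff q z n k * qpoch z q m * (1 / qpoch (q ^ k) q (Suc m)))"
    unfolding lhs_sum_def
  proof (rule sum.cong[OF refl])
    fix k
    have "qpoch (q / z) q k * z ^ k = qpoch_hom q z k"
      by (rule qpoch_div_times_power[OF z_nonzero])
    then show "qpoch (q / z) q k * qpoch z q (n - k) * qpoch z q m
        / (qpoch q q k * qpoch q q (n - k) * qpoch (q ^ k) q (m + 1)) * z ^ k
      = pf_coeff q z n k * qpoch z q m * (1 / qpoch (q ^ k) q (Suc m))"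
      unfolding pf_coeff_def by (simp add: field_simps)
  qed
  also have "\<dots> = (\<Sum>k=1..n. \<Sum>l\<le>m. qinv_coeff q m l * (qpoch z q m * (pf_coeff q z n k / (1 - q ^ (k + l)))))"
    by (rule sum.cong[OF refl])
      (simp add: inverse_qpoch_qpow_partial_fractions sum_distrib_left mult_ac)
  also have "\<dots> = (\<Sum>l\<le>m. qinv_coeff q m l * (qpoch z q m * (\<Sum>k=1..n. pf_coeff q z n k / (1 - q ^ (k + l)))))"
    by (subst sum.swap) (simp add: sum_distrib_left)
  finally show ?thesis .
qed

lemma qdouble_sum_swap:
  "qdouble_sum q \<phi> z n m = (\<Sum>l\<le>m. qinv_coeff q m l
      * (qpoch z q m * (\<Sum>k\<le>n. qinv_coeff q n k * (qpoch (z * q ^ l) q n * \<phi> (k + l)))))"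
  unfolding qdouble_sum_def qinner_sum_def sum_distrib_left by (subst sum.swap) (simp add: mult_ac)

text \<open>\<open>\<lambda>j. 1 / (1 - q\<^sup>j)\<close> is used with its junk value \<open>1 / 0 = 0\<close> at \<open>j = 0\<close>, which discards
  the term \<open>k = l = 0\<close> of the double sum.\<close>

lemma pf_coeff_sum_shift:
  "(\<Sum>k=1..n. pf_coeff q z n k / (1 - q ^ (k + l)))
   = (\<Sum>k\<le>n. qinv_coeff q n k * (qpoch (z * q ^ l) q n * (1 / (1 - q ^ (k + l)))))
     + (if l = 0 then pf_tail_sum q z n - qpoch z q n * pf_tail_sum q 0 n
        else - (qpoch z q n / qpoch q q n) / (1 - q ^ l))"
proof (cases "l = 0")
  case True
  have "(\<Sum>k\<le>n. qinv_coeff q n k * (qpoch z q n * (1 / (1 - q ^ k)))) = qpoch z q n * pf_tail_sum q 0 n"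
    unfolding sum_atMost_eq_0_plus_atLeast_1[of _ n] pf_tail_sum_def
    by (simp add: qinv_coeff_def sum_distrib_left mult_ac)
  then show ?thesis
    using True by (simp add: pf_tail_sum_def)
next
  case False
  then have l: "l \<ge> 1"
    by simp
  have full: "(\<Sum>k\<le>n. pf_coeff q z n k / (1 - q ^ (k + l))) = qpoch (z * q ^ l) q n / qpoch (q ^ l) q (Suc n)"
    using pf_coeff_partial_fractions[of n "q ^ l" z] qpow_ne_1[of "l + _"] l
    by (simp add: power_add mult_ac)
  have "(\<Sum>k\<le>n. qinv_coeff q n k * (qpoch (z * q ^ l) q n * (1 / (1 - q ^ (k + l)))))
      = qpoch (z * q ^ l) q n * (\<Sum>k\<le>n. qinv_coeff q n k / (1 - q ^ (k + l)))"
    by (simp add: sum_distrib_left mult_ac)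
  also have "(\<Sum>k\<le>n. qinv_coeff q n k / (1 - q ^ (k + l))) = 1 / qpoch (q ^ l) q (Suc n)"
    using inverse_qpoch_qpow_partial_fractions[OF l, of n] by (simp add: add.commute)
  finally show ?thesis
    using full sum_atMost_eq_0_plus_atLeast_1[of "\<lambda>k. pf_coeff q z n k / (1 - q ^ (k + l))" n] False
    by (simp add: pf_coeff_0_right algebra_simps)
qed

lemma lhs_sum_decomposition:
  "lhs_sum n m = qpoch z q m / qpoch q q m * pf_tail_sum q z n
     + qdouble_sum q (\<lambda>j. 1 / (1 - q ^ j)) z n m
     - qpoch z q m * qpoch z q n * (pf_tail_sum q 0 n / qpoch q q m + pf_tail_sum q 0 m / qpoch q q n)"
proof -
  define G where "G l = (if l = 0 then pf_tail_sum q z n - qpoch z q n * pf_tail_sum q 0 n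
      else - (qpoch z q n / qpoch q q n) / (1 - q ^ l))" for l
  have "lhs_sum n m - qdouble_sum q (\<lambda>j. 1 / (1 - q ^ j)) z n m
      = (\<Sum>l\<le>m. qinv_coeff q m l * (qpoch z q m * G l))"
    unfolding lhs_sum_expand qdouble_sum_swap pf_coeff_sum_shift G_def[symmetric]
    by (simp add: sum_subtractf[symmetric] algebra_simps)
  also have "\<dots> = qinv_coeff q m 0 * (qpoch z q m * (pf_tail_sum q z n - qpoch z q n * pf_tail_sum q 0 n))
      - qpoch z q m * (qpoch z q n / qpoch q q n) * pf_tail_sum q 0 m"
    unfolding sum_atMost_eq_0_plus_atLeast_1[of _ m] pf_tail_sum_def G_def
    by (simp add: qinv_coeff_def sum_distrib_left sum_negf algebra_simps)
  finally have lhs: "lhs_sum n m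
      = qinv_coeff q m 0 * (qpoch z q m * (pf_tail_sum q z n - qpoch z q n * pf_tail_sum q 0 n))
        - qpoch z q m * (qpoch z q n / qpoch q q n) * pf_tail_sum q 0 m
        + qdouble_sum q (\<lambda>j. 1 / (1 - q ^ j)) z n m"
    by (simp add: diff_eq_eq)
  have coeff0: "qinv_coeff q m 0 = 1 / qpoch q q m"
    by (simp add: qinv_coeff_def pf_coeff_0_right)
  show ?thesis
    unfolding lhs coeff0 using qpoch_q_nonzero[of m] qpoch_q_nonzero[of n] by (simp add: field_simps)
qed

end

theorem corollary6p1:
  fixes q z :: "'a::field_char_0" and m n :: nat
  assumes "q \<noteq> 0" and "z \<noteq> 0"
    and "\<And>j. j \<ge> 1 \<Longrightarrow> q ^ j \<noteq> 1"
    and "\<And>j. z * q ^ j \<noteq> 1"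
  shows "(\<Sum>k=1..n. qpoch (q/z) q k * qpoch z q (n-k) * qpoch z q m
              / (qpoch q q k * qpoch q q (n-k) * qpoch (q^k) q (m+1)) * z^k)
       - (\<Sum>k=1..m. qpoch (q/z) q k * qpoch z q (m-k) * qpoch z q n
              / (qpoch q q k * qpoch q q (m-k) * qpoch (q^k) q (n+1)) * z^k)
       = (1 - z / q) * qpoch z q m * qpoch z q n / (qpoch q q m * qpoch q q n)
         * ((\<Sum>k=1..m. q^k / ((1 - z * q^(k-1)) * (1 - q^k)))
            - (\<Sum>k=1..n. q^k / ((1 - z * q^(k-1)) * (1 - q^k))))"
proof -
  interpret qz_generic q z
    using assms by unfold_locales auto
  have tail: "pf_tail_sum q z N = - (qpoch z q N / qpoch q q N) * (1 - z / q) * qharmonic q z N" for N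
    using pf_tail_sum_eq zqpow_ne_1 by blast
  have "lhs_sum n m - lhs_sum m n
      = qpoch z q m / qpoch q q m * pf_tail_sum q z n - qpoch z q n / qpoch q q n * pf_tail_sum q z m"
    unfolding lhs_sum_decomposition qdouble_sum_commute[of _ z n m] by (simp add: algebra_simps)
  also have "\<dots> = (1 - z / q) * qpoch z q m * qpoch z q n / (qpoch q q m * qpoch q q n)
      * (qharmonic q z m - qharmonic q z n)"
    unfolding tail using qpoch_q_nonzero[of m] qpoch_q_nonzero[of n] q_nonzero
    by (simp add: field_simps)
  finally show ?thesis
    unfolding lhs_sum_def qharmonic_def by simp
qed

end
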